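(* On each of the three charts of $\mathbb OP^2$, with chart coordinates $(u,v)\in\mathbb O^2$, consider the quadratic form on tangent vectors $(du,dv)=(\xi,\eta)\in\mathbb O^2$ $$ds^2=\frac{|\xi|^2(1+|v|^2)+|\eta|^2(1+|u|^2)-2\,\mathrm{Re}\big[(u\bar v)(\eta\bar\xi)\big]}{(1+|u|^2+|v|^2)^2}.$$ Then these expressions are positive definite and agree on chart overlaps, so they define a Riemannian metric on $\mathbb OP^2$.
   Context: Octonions: $\mathbb O=\mathbb H\oplus\mathbb H$ with product $(q_1,q_2)(p_1,p_2)=(q_1p_1-\bar p_2q_2,\ p_2q_1+q_2\bar p_1)$, conjugation $\overline{(q_1,q_2)}=(\bar q_1,-q_2)$, $\mathrm{Re}(a)$ the real part of the first quaternion component, inner product $\langle a,b\rangle=\mathrm{Re}(a\bar b)$, $|a|^2=\langle a,a\rangle$. $\mathbb OP^2=\mathcal U/_\sim$ where $\mathcal U=(\{1\}\times\mathbb O\times\mathbb O)\cup(\mathbb O\times\{1\}\times\mathbb O)\cup(\mathbb O\times\mathbb O\times\{1\})$ and $[a,b,c]\sim[d,e,f]$ iff $a=d\lambda,b=e\lambda,c=f\lambda$ for some $\lambda\in\mathbb O\setminus\{0\}$. The charts are $[1,u,v]\mapsto(u,v)$, $[u,1,v]\mapsto(u,v)$, $[u,v,1]\mapsto(u,v)$; transition maps are e.g. $(a,b)\mapsto(a^{-1},ba^{-1})$ between the first two. *)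

theory Defs
  imports "HOL-Analysis.Analysis"
begin

text \<open>Quaternions as 4-tuples of reals (a + b i + c j + d k), with the Hamilton product.
  The additive structure, scaling and topology come from the product type instances.\<close>
type_synonym quat = "real \<times> real \<times> real \<times> real"

fun qmult :: "quat \<Rightarrow> quat \<Rightarrow> quat" where
  "qmult (a1, b1, c1, d1) (a2, b2, c2, d2) =
     (a1*a2 - b1*b2 - c1*c2 - d1*d2,
      a1*b2 + b1*a2 + c1*d2 - d1*c2,
      a1*c2 - b1*d2 + c1*a2 + d1*b2,
      a1*d2 + b1*c2 - c1*b2 + d1*a2)"

fun qcnj :: "quat \<Rightarrow> quat" where
  "qcnj (a, b, c, d) = (a, -b, -c, -d)"

text \<open>Octonions O = H + H (Cayley-Dickson), with the product from the paper.\<close>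
type_synonym oct = "quat \<times> quat"

fun omult :: "oct \<Rightarrow> oct \<Rightarrow> oct" where
  "omult (q1, q2) (p1, p2) = (qmult q1 p1 - qmult (qcnj p2) q2, qmult p2 q1 + qmult q2 (qcnj p1))"

fun ocnj :: "oct \<Rightarrow> oct" where
  "ocnj (q1, q2) = (qcnj q1, - q2)"

definition oone :: oct where
  "oone = ((1, 0, 0, 0), 0)"

definition oRe :: "oct \<Rightarrow> real" where
  "oRe a = fst (fst a)"

definition oinner :: "oct \<Rightarrow> oct \<Rightarrow> real" where
  "oinner a b = oRe (omult a (ocnj b))"

definition onorm2 :: "oct \<Rightarrow> real" where
  "onorm2 a = oinner a a"

definition oinv :: "oct \<Rightarrow> oct" where
  "oinv a = (1 / onorm2 a) *\<^sub>R ocnj a"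

definition chart_emb :: "nat \<Rightarrow> oct \<times> oct \<Rightarrow> oct \<times> oct \<times> oct" where
  "chart_emb k p = (if k = 0 then (oone, fst p, snd p)
                    else if k = 1 then (fst p, oone, snd p)
                    else (fst p, snd p, oone))"

definition tcoord :: "nat \<Rightarrow> oct \<times> oct \<times> oct \<Rightarrow> oct" where
  "tcoord k t = (if k = 0 then fst t else if k = 1 then fst (snd t) else snd (snd t))"

definition trest :: "nat \<Rightarrow> oct \<times> oct \<times> oct \<Rightarrow> oct \<times> oct" where
  "trest k t = (if k = 0 then snd t
                else if k = 1 then (fst t, snd (snd t))
                else (fst t, fst (snd t)))"

text \<open>Transition map from chart i to chart j: [t0,t1,t2] ~ [t0 l^{-1}, t1 l^{-1}, t2 l^{-1}]
  with l = t_j (i.e. lambda = t_j), defined where t_j \<noteq> 0.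
  E.g. i=0, j=1 gives (a,b) \<mapsto> (a^{-1}, b a^{-1}).\<close>
definition transition :: "nat \<Rightarrow> nat \<Rightarrow> oct \<times> oct \<Rightarrow> oct \<times> oct" where
  "transition i j p =
     (let t = chart_emb i p; l = tcoord j t; r = trest j t
      in (omult (fst r) (oinv l), omult (snd r) (oinv l)))"

definition ds2 :: "oct \<times> oct \<Rightarrow> oct \<times> oct \<Rightarrow> real" where
  "ds2 p w = (let u = fst p; v = snd p; \<xi> = fst w; \<eta> = snd w in
     (onorm2 \<xi> * (1 + onorm2 v) + onorm2 \<eta> * (1 + onorm2 u)
       - 2 * oRe (omult (omult u (ocnj v)) (omult \<eta> (ocnj \<xi>))))
     / (1 + onorm2 u + onorm2 v)^2)"

end

theory Submission
  imports Defs
begin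

text \<open>
  Positivity: by Cauchy-Schwarz and multiplicativity of the octonion norm,
  \<open>|Re((u conj v)(\<eta> conj \<xi>))| \<le> |u| |v| |\<xi>| |\<eta>|\<close>, so the numerator of \<open>ds\<^sup>2\<close> is at least
  \<open>|\<xi>|\<^sup>2 + |\<eta>|\<^sup>2 + (|\<xi>| |v| - |\<eta>| |u|)\<^sup>2\<close>.

  Compatibility: every transition map is the identity, the inversion
  \<open>(a, b) \<mapsto> (a\<inverse>, b a\<inverse>)\<close>, or a composite of it with the swap of the two
  coordinates; the swap preserves \<open>ds\<^sup>2\<close> because conjugation reverses products.
  Although the octonions are not associative, the composition-algebra identities
  \<open>\<langle>x y, z\<rangle> = \<langle>y, conj x z\<rangle>\<close>, \<open>conj x (x y) = |x|\<^sup>2 y\<close> and the polarised \<open>\<langle>y x, w z\<rangle> + \<langle>y z, w x\<rangle> = 2 \<langle>y, w\<rangle> \<langle>x, z\<rangle>\<close>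
  suffice to show that the inversion divides the numerator of \<open>ds\<^sup>2\<close> by \<open>|a|\<^sup>4\<close> and
  \<open>1 + |u|\<^sup>2 + |v|\<^sup>2\<close> by \<open>|a|\<^sup>2\<close>.
\<close>

lemma oct_exhaust: obtains a1 a2 a3 a4 a5 a6 a7 a8 :: real
  where "x = ((a1, a2, a3, a4), (a5, a6, a7, a8))"
  by (metis prod.exhaust)

lemma ocnj_ocnj [simp]: "ocnj (ocnj x) = x"
  by (cases x rule: oct_exhaust) simp

lemma ocnj_omult [simp]: "ocnj (omult x y) = omult (ocnj y) (ocnj x)"
  by (cases x rule: oct_exhaust, cases y rule: oct_exhaust) (simp add: algebra_simps)

lemma inner_ocnj [simp]: "ocnj x \<bullet> ocnj y = x \<bullet> y"
  by (cases x rule: oct_exhaust, cases y rule: oct_exhaust) (simp add: algebra_simps)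

lemma ocnj_add [simp]: "ocnj (x + y) = ocnj x + ocnj y"
  by (cases x rule: oct_exhaust, cases y rule: oct_exhaust) simp

lemma ocnj_scaleR [simp]: "ocnj (r *\<^sub>R x) = r *\<^sub>R ocnj x"
  by (cases x rule: oct_exhaust) simp

lemma norm_ocnj [simp]: "norm (ocnj x) = norm x"
  by (simp add: norm_eq_sqrt_inner)

lemma oRe_omult: "oRe (omult x y) = x \<bullet> ocnj y"
  by (cases x rule: oct_exhaust, cases y rule: oct_exhaust) (simp add: algebra_simps oRe_def)

lemma onorm2_eq_inner: "onorm2 x = x \<bullet> x"
  by (simp add: onorm2_def oinner_def oRe_omult)

lemma oinv_eq: "oinv x = (1 / (x \<bullet> x)) *\<^sub>R ocnj x"
  by (simp add: oinv_def onorm2_eq_inner)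

lemma inner_omult_self: "omult x y \<bullet> omult x y = (x \<bullet> x) * (y \<bullet> y)"
  by (cases x rule: oct_exhaust, cases y rule: oct_exhaust) (simp add: algebra_simps power2_eq_square)

lemma inner_omult_left: "omult x y \<bullet> z = y \<bullet> omult (ocnj x) z"
  by (cases x rule: oct_exhaust, cases y rule: oct_exhaust, cases z rule: oct_exhaust)
    (simp add: algebra_simps)

lemma inner_omult_right: "omult x y \<bullet> z = x \<bullet> omult z (ocnj y)"
  by (cases x rule: oct_exhaust, cases y rule: oct_exhaust, cases z rule: oct_exhaust)
    (simp add: algebra_simps)

lemma omult_ocnj_omult: "omult (ocnj x) (omult x y) = (x \<bullet> x) *\<^sub>R y"
  by (cases x rule: oct_exhaust, cases y rule: oct_exhaust) (simp add: algebra_simps)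

lemma omult_omult_ocnj: "omult (omult y x) (ocnj x) = (x \<bullet> x) *\<^sub>R y"
  by (cases x rule: oct_exhaust, cases y rule: oct_exhaust) (simp add: algebra_simps)

lemma omult_omult_ocnj_polar:
  "omult (omult w z) (ocnj x) + omult (omult w x) (ocnj z) = (2 * (x \<bullet> z)) *\<^sub>R w"
  by (cases x rule: oct_exhaust, cases w rule: oct_exhaust, cases z rule: oct_exhaust)
    (simp add: algebra_simps)

lemma omult_oone_left [simp]: "omult oone x = x"
  by (cases x rule: oct_exhaust) (simp add: oone_def zero_prod_def)

lemma omult_oone_right [simp]: "omult x oone = x"
  by (cases x rule: oct_exhaust) (simp add: oone_def zero_prod_def)

lemma oinv_oone [simp]: "oinv oone = oone"
  by (simp add: oinv_eq oone_def zero_prod_def)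

lemma norm_omult: "norm (omult x y) = norm x * norm y"
  by (simp add: norm_eq_sqrt_inner inner_omult_self real_sqrt_mult)

interpretation omult: bounded_bilinear omult
proof
  fix x y z :: oct and r :: real
  show "omult (x + y) z = omult x z + omult y z" "omult x (y + z) = omult x y + omult x z"
    "omult (r *\<^sub>R x) y = r *\<^sub>R omult x y" "omult x (r *\<^sub>R y) = r *\<^sub>R omult x y"
    by (cases x rule: oct_exhaust, cases y rule: oct_exhaust, cases z rule: oct_exhaust;
        simp add: algebra_simps)+
  show "\<exists>K. \<forall>x y. norm (omult x y) \<le> norm x * norm y * K"
    by (rule exI[of _ 1]) (simp add: norm_omult)
qed

lemma bounded_linear_ocnj: "bounded_linear ocnj"
  by (rule bounded_linear_intro[of _ 1]) simp_all

lemma inner_omult_cancel_right: "omult y a \<bullet> omult z a = (a \<bullet> a) * (y \<bullet> z)"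
  by (simp add: inner_omult_right[of y a] omult_omult_ocnj)

lemma inner_omult_exchange:
  "omult y x \<bullet> omult w z + omult y z \<bullet> omult w x = 2 * (y \<bullet> w) * (x \<bullet> z)"
proof -
  have "omult y x \<bullet> omult w z + omult y z \<bullet> omult w x
      = y \<bullet> (omult (omult w z) (ocnj x) + omult (omult w x) (ocnj z))"
    by (simp only: inner_omult_right[of y] inner_add_right)
  then show ?thesis
    by (simp add: omult_omult_ocnj_polar)
qed

lemma ds2_eq_inner:
  "ds2 (u, v) (\<xi>, \<eta>) =
     ((\<xi> \<bullet> \<xi>) * (1 + v \<bullet> v) + (\<eta> \<bullet> \<eta>) * (1 + u \<bullet> u)
       - 2 * (omult u (ocnj v) \<bullet> omult \<xi> (ocnj \<eta>)))
     / (1 + u \<bullet> u + v \<bullet> v)\<^sup>2"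
  by (simp add: ds2_def onorm2_eq_inner oRe_omult)

lemma ds2_pos:
  assumes "w \<noteq> 0"
  shows "ds2 p w > 0"
proof -
  obtain u v \<xi> \<eta> where p: "p = (u, v)" and w: "w = (\<xi>, \<eta>)"
    by (cases p, cases w)
  have "omult u (ocnj v) \<bullet> omult \<xi> (ocnj \<eta>)
      \<le> norm (omult u (ocnj v)) * norm (omult \<xi> (ocnj \<eta>))"
    by (rule norm_cauchy_schwarz)
  also have "\<dots> = norm u * norm v * norm \<xi> * norm \<eta>"
    by (simp add: norm_omult)
  finally have cs:
    "omult u (ocnj v) \<bullet> omult \<xi> (ocnj \<eta>) \<le> norm u * norm v * norm \<xi> * norm \<eta>" .
  have "(norm \<xi>)\<^sup>2 + (norm \<eta>)\<^sup>2 + (norm \<xi> * norm v - norm \<eta> * norm u)\<^sup>2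
      \<le> (\<xi> \<bullet> \<xi>) * (1 + v \<bullet> v) + (\<eta> \<bullet> \<eta>) * (1 + u \<bullet> u)
        - 2 * (omult u (ocnj v) \<bullet> omult \<xi> (ocnj \<eta>))"
    using cs by (simp add: power2_norm_eq_inner[symmetric] power2_eq_square algebra_simps)
  moreover have "(norm \<xi>)\<^sup>2 + (norm \<eta>)\<^sup>2 > 0"
    using assms w by (auto simp: zero_prod_def add_pos_nonneg add_nonneg_pos)
  ultimately have "(\<xi> \<bullet> \<xi>) * (1 + v \<bullet> v) + (\<eta> \<bullet> \<eta>) * (1 + u \<bullet> u)
      - 2 * (omult u (ocnj v) \<bullet> omult \<xi> (ocnj \<eta>)) > 0"
    using zero_le_power2[of "norm \<xi> * norm v - norm \<eta> * norm u"] by linarith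
  moreover have "1 + u \<bullet> u + v \<bullet> v > 0"
    by (simp add: add_pos_nonneg)
  ultimately show ?thesis
    unfolding p w ds2_eq_inner by simp
qed

lemma ds2_swap: "ds2 (prod.swap p) (prod.swap w) = ds2 p w"
proof -
  obtain u v \<xi> \<eta> where "p = (u, v)" and "w = (\<xi>, \<eta>)"
    by (cases p, cases w)
  moreover have
    "omult v (ocnj u) \<bullet> omult \<eta> (ocnj \<xi>) = omult u (ocnj v) \<bullet> omult \<xi> (ocnj \<eta>)"
    by (metis inner_ocnj ocnj_omult ocnj_ocnj)
  ultimately show ?thesis
    by (simp add: ds2_eq_inner add.commute add.left_commute)
qed

definition oinv_deriv :: "oct \<Rightarrow> oct \<Rightarrow> oct" where
  "oinv_deriv a x = (1 / (a \<bullet> a)) *\<^sub>R ocnj x - (2 * (a \<bullet> x) / (a \<bullet> a)\<^sup>2) *\<^sub>R ocnj a"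

lemma has_derivative_oinv:
  assumes "a \<noteq> 0"
  shows "(oinv has_derivative oinv_deriv a) (at a)"
proof -
  have "oinv = (\<lambda>x. inverse (x \<bullet> x) *\<^sub>R ocnj x)"
    by (simp add: fun_eq_iff oinv_eq inverse_eq_divide)
  moreover have "((\<lambda>x. inverse (x \<bullet> x) *\<^sub>R ocnj x) has_derivative
      (\<lambda>h. inverse (a \<bullet> a) *\<^sub>R ocnj h
         + (- (inverse (a \<bullet> a) * (a \<bullet> h + h \<bullet> a) * inverse (a \<bullet> a))) *\<^sub>R ocnj a)) (at a)"
    using assms
    by (intro has_derivative_scaleR Deriv.has_derivative_inverse has_derivative_inner
        has_derivative_ident bounded_linear.has_derivative[OF bounded_linear_ocnj]) simp_all
  moreover have "inverse (a \<bullet> a) *\<^sub>R ocnj h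
         + (- (inverse (a \<bullet> a) * (a \<bullet> h + h \<bullet> a) * inverse (a \<bullet> a))) *\<^sub>R ocnj a
      = oinv_deriv a h" for h
    by (simp add: oinv_deriv_def inner_commute[of h a] divide_inverse power2_eq_square
        algebra_simps)
  ultimately show ?thesis
    by simp
qed

lemma inner_oinv_self: "oinv a \<bullet> oinv a = 1 / (a \<bullet> a)"
  by (simp add: oinv_eq power2_eq_square)

lemma inner_omult_oinv_self: "omult b (oinv a) \<bullet> omult b (oinv a) = (b \<bullet> b) / (a \<bullet> a)"
  by (simp add: inner_omult_self inner_oinv_self)

lemma omult_oinv_ocnj_omult_oinv:
  "omult (oinv a) (ocnj (omult b (oinv a))) = (1 / (a \<bullet> a)) *\<^sub>R ocnj b"
proof -
  have "omult (oinv a) (ocnj (omult b (oinv a)))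
      = (1 / (a \<bullet> a))\<^sup>2 *\<^sub>R omult (ocnj a) (omult a (ocnj b))"
    by (simp add: oinv_eq omult.scaleR_left omult.scaleR_right power2_eq_square)
  then show ?thesis
    by (simp add: omult_ocnj_omult power2_eq_square)
qed

lemma inner_oinv_deriv_self:
  assumes "a \<noteq> 0"
  shows "oinv_deriv a x \<bullet> oinv_deriv a x = (x \<bullet> x) / (a \<bullet> a)\<^sup>2"
  using assms
  unfolding oinv_deriv_def inner_diff_left inner_diff_right inner_scaleR_left inner_scaleR_right inner_ocnj
  by (simp add: inner_commute[of x a] power2_eq_square algebra_simps)

lemma inner_omult_oinv_omult_oinv_deriv:
  assumes "a \<noteq> 0"
  shows "omult y (oinv a) \<bullet> omult b (oinv_deriv a x)
    = - (omult a (ocnj b) \<bullet> omult x (ocnj y)) / (a \<bullet> a)\<^sup>2"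
proof -
  let ?n = "a \<bullet> a" and ?P = "omult a (ocnj b) \<bullet> omult x (ocnj y)"
  have exchange: "omult y (ocnj a) \<bullet> omult b (ocnj x) = 2 * (y \<bullet> b) * (a \<bullet> x) - ?P"
    using inner_omult_exchange[of y "ocnj a" b "ocnj x"]
    by (metis inner_ocnj ocnj_omult ocnj_ocnj inner_commute eq_diff_eq)
  have "omult y (oinv a) \<bullet> omult b (oinv_deriv a x)
      = 1 / ?n * (1 / ?n * (omult y (ocnj a) \<bullet> omult b (ocnj x)))
          - 2 * (a \<bullet> x) / ?n\<^sup>2 * (1 / ?n * (omult y (ocnj a) \<bullet> omult b (ocnj a)))"
    by (simp only: oinv_eq oinv_deriv_def omult.scaleR_right omult.diff_right inner_diff_right
        inner_scaleR_left inner_scaleR_right)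
  also have "\<dots> = 1 / ?n * (1 / ?n * (2 * (y \<bullet> b) * (a \<bullet> x) - ?P))
          - 2 * (a \<bullet> x) / ?n\<^sup>2 * (1 / ?n * (?n * (y \<bullet> b)))"
    by (simp only: exchange inner_omult_cancel_right inner_ocnj)
  also have "\<dots> = - ?P / ?n\<^sup>2"
    using assms by (simp add: field_simps power2_eq_square)
  finally show ?thesis .
qed

definition inversion_map :: "oct \<times> oct \<Rightarrow> oct \<times> oct" where
  "inversion_map p = (oinv (fst p), omult (snd p) (oinv (fst p)))"

lemma has_derivative_inversion_map:
  assumes "a \<noteq> 0"
  shows "(inversion_map has_derivative
      (\<lambda>w. (oinv_deriv a (fst w), omult (snd w) (oinv a) + omult b (oinv_deriv a (fst w)))))
      (at (a, b))"
proof -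
  have "(oinv has_derivative oinv_deriv a) (at (fst (a, b)))"
    using has_derivative_oinv[OF assms] by simp
  from has_derivative_compose[OF has_derivative_fst[OF has_derivative_ident] this]
  have oinv_fst: "((\<lambda>p. oinv (fst p)) has_derivative (\<lambda>w. oinv_deriv a (fst w))) (at (a, b))"
    by simp
  have "((\<lambda>p. (oinv (fst p), omult (snd p) (oinv (fst p)))) has_derivative
      (\<lambda>w. (oinv_deriv a (fst w),
        omult (snd (a, b)) (oinv_deriv a (fst w)) + omult (snd w) (oinv (fst (a, b)))))) (at (a, b))"
    by (intro has_derivative_Pair omult.FDERIV has_derivative_snd has_derivative_ident oinv_fst)
  then show ?thesis
    unfolding inversion_map_def[abs_def] by (simp add: add.commute)
qed

lemma ds2_inversion_map:
  assumes "a \<noteq> 0"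
  shows "ds2 (inversion_map (a, b))
      (oinv_deriv a x, omult y (oinv a) + omult b (oinv_deriv a x)) = ds2 (a, b) (x, y)"
proof -
  let ?n = "a \<bullet> a" and ?P = "omult a (ocnj b) \<bullet> omult x (ocnj y)"
  let ?\<xi> = "oinv_deriv a x"
  let ?\<eta> = "omult y (oinv a) + omult b ?\<xi>"
  have n: "?n > 0"
    using assms by simp
  have b\<xi>: "omult b ?\<xi> \<bullet> omult b ?\<xi> = (b \<bullet> b) * (x \<bullet> x) / ?n\<^sup>2"
    using assms by (simp add: inner_omult_self inner_oinv_deriv_self)
  have y_b\<xi>: "omult y (oinv a) \<bullet> omult b ?\<xi> = - ?P / ?n\<^sup>2"
    using assms by (rule inner_omult_oinv_omult_oinv_deriv)
  have \<eta>: "?\<eta> \<bullet> ?\<eta> = (y \<bullet> y) / ?n - 2 * ?P / ?n\<^sup>2 + (b \<bullet> b) * (x \<bullet> x) / ?n\<^sup>2"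
    by (simp add: inner_add_left inner_add_right inner_omult_oinv_self b\<xi> y_b\<xi>
        inner_commute[of "omult b ?\<xi>" "omult y (oinv a)"])
  have "ocnj b \<bullet> omult ?\<xi> (ocnj ?\<eta>) = omult b ?\<xi> \<bullet> ?\<eta>"
    by (simp only: inner_commute[of "ocnj b"] inner_omult_right[of ?\<xi>] ocnj_ocnj
        inner_omult_left[of b])
  also have "\<dots> = ((b \<bullet> b) * (x \<bullet> x) - ?P) / ?n\<^sup>2"
    by (simp add: inner_add_right b\<xi> y_b\<xi> inner_commute[of "omult b ?\<xi>" "omult y (oinv a)"]
        diff_divide_distrib)
  finally have "ocnj b \<bullet> omult ?\<xi> (ocnj ?\<eta>) = ((b \<bullet> b) * (x \<bullet> x) - ?P) / ?n\<^sup>2" .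
  then have cross: "omult (oinv a) (ocnj (omult b (oinv a))) \<bullet> omult ?\<xi> (ocnj ?\<eta>)
      = ((b \<bullet> b) * (x \<bullet> x) - ?P) / ?n ^ 3"
    unfolding omult_oinv_ocnj_omult_oinv inner_scaleR_left
    by (simp add: power2_eq_square power3_eq_cube)
  have arith: "(X / n\<^sup>2 * (1 + B / n) + (Y / n - 2 * P / n\<^sup>2 + B * X / n\<^sup>2) * (1 + 1 / n)
        - 2 * ((B * X - P) / n ^ 3)) / (1 + 1 / n + B / n)\<^sup>2
      = (X * (1 + B) + Y * (1 + n) - 2 * P) / (1 + n + B)\<^sup>2" if "n > 0" for n X Y B P :: real
  proof -
    have "X / n\<^sup>2 * (1 + B / n) + (Y / n - 2 * P / n\<^sup>2 + B * X / n\<^sup>2) * (1 + 1 / n)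
        - 2 * ((B * X - P) / n ^ 3) = (X * (1 + B) + Y * (1 + n) - 2 * P) / n\<^sup>2"
      using that by (simp add: field_simps power2_eq_square power3_eq_cube)
    moreover have "1 + 1 / n + B / n = (1 + n + B) / n"
      using that by (simp add: field_simps)
    ultimately show ?thesis
      using that by (simp add: power_divide)
  qed
  show ?thesis
    unfolding inversion_map_def fst_conv snd_conv ds2_eq_inner \<eta> cross
      inner_oinv_self inner_omult_oinv_self inner_oinv_deriv_self[OF assms]
    by (rule arith[OF n])
qed

definition preserves_ds2_at :: "(oct \<times> oct \<Rightarrow> oct \<times> oct) \<Rightarrow> oct \<times> oct \<Rightarrow> bool" where
  "preserves_ds2_at f p \<longleftrightarrow>
     (\<exists>D. (f has_derivative D) (at p) \<and> (\<forall>w. ds2 (f p) (D w) = ds2 p w))"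

lemma preserves_ds2_at_id: "preserves_ds2_at id p"
  unfolding preserves_ds2_at_def by (auto intro: has_derivative_id)

lemma preserves_ds2_at_swap: "preserves_ds2_at prod.swap p"
proof -
  have "(prod.swap has_derivative prod.swap) (at p)"
    unfolding prod.swap_def[abs_def]
    by (intro has_derivative_Pair has_derivative_fst has_derivative_snd has_derivative_ident)
  then show ?thesis
    unfolding preserves_ds2_at_def using ds2_swap by blast
qed

lemma preserves_ds2_at_compose:
  assumes "preserves_ds2_at f p" and "preserves_ds2_at g (f p)"
  shows "preserves_ds2_at (g \<circ> f) p"
proof -
  obtain D where D: "(f has_derivative D) (at p)" "\<And>w. ds2 (f p) (D w) = ds2 p w"
    using assms(1) unfolding preserves_ds2_at_def by blast
  obtain E where E: "(g has_derivative E) (at (f p))" "\<And>w. ds2 (g (f p)) (E w) = ds2 (f p) w"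
    using assms(2) unfolding preserves_ds2_at_def by blast
  have "(g \<circ> f has_derivative E \<circ> D) (at p)"
    using D(1) E(1) by (rule diff_chain_at)
  moreover have "ds2 ((g \<circ> f) p) ((E \<circ> D) w) = ds2 p w" for w
    by (simp add: D(2) E(2))
  ultimately show ?thesis
    unfolding preserves_ds2_at_def by blast
qed

lemma preserves_ds2_at_inversion_map:
  assumes "fst p \<noteq> 0"
  shows "preserves_ds2_at inversion_map p"
proof -
  obtain a b where p: "p = (a, b)"
    by (cases p)
  with assms have a: "a \<noteq> 0"
    by simp
  have "ds2 (inversion_map (a, b))
      (oinv_deriv a (fst w), omult (snd w) (oinv a) + omult b (oinv_deriv a (fst w)))
    = ds2 (a, b) w" for w
    by (cases w) (simp add: ds2_inversion_map[OF a])
  with has_derivative_inversion_map[OF a] show ?thesis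
    unfolding preserves_ds2_at_def p by blast
qed

lemma transition_self: "transition i i = id"
  by (simp add: fun_eq_iff transition_def chart_emb_def tcoord_def trest_def)

lemma transition_eq_inversion_map:
  "transition 0 1 = inversion_map"
  "transition 1 0 = inversion_map"
  "transition 0 2 = inversion_map \<circ> prod.swap"
  "transition 2 0 = prod.swap \<circ> inversion_map"
  "transition 1 2 = prod.swap \<circ> inversion_map \<circ> prod.swap"
  "transition 2 1 = prod.swap \<circ> inversion_map \<circ> prod.swap"
  by (simp_all add: fun_eq_iff transition_def chart_emb_def tcoord_def trest_def inversion_map_def)

lemma transition_preserves_ds2_at:
  assumes "i < 3" "j < 3" "tcoord j (chart_emb i p) \<noteq> 0"
  shows "preserves_ds2_at (transition i j) p"
proof -
  have "i = 0 \<or> i = 1 \<or> i = 2" "j = 0 \<or> j = 1 \<or> j = 2"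
    using assms(1,2) by auto
  then show ?thesis
    using assms(3)
    by (elim disjE; hypsubst; simp only: transition_self transition_eq_inversion_map)
      (auto simp: chart_emb_def tcoord_def
        intro!: preserves_ds2_at_id preserves_ds2_at_compose preserves_ds2_at_swap
          preserves_ds2_at_inversion_map)
qed

theorem theorem3p4:
  shows "(\<forall>p w. w \<noteq> 0 \<longrightarrow> ds2 p w > 0)
       \<and> (\<forall>i<3. \<forall>j<3. \<forall>p. tcoord j (chart_emb i p) \<noteq> 0 \<longrightarrow>
            (\<exists>D. (transition i j has_derivative D) (at p) \<and>
                 (\<forall>w. ds2 (transition i j p) (D w) = ds2 p w)))"
  using ds2_pos transition_preserves_ds2_at unfolding preserves_ds2_at_def by blast

end
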